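(* For every $\delta>0$ there exists $\varepsilon'>0$ such that the following holds for every $\varepsilon\in(0,\varepsilon')$ and every sufficiently large $n$. Let $s'$ be a positive integer, let $H_1,H_2$ be vertex-disjoint multigraphs, each on $n$ vertices, in each of which every pair of vertices is joined by exactly $s'$ parallel edges, let $H=(V(H_1)\cup V(H_2),E(H_1)\cup E(H_2))$, and let $b\leq (1-\delta)\frac{s'n}{\log(n)}$. Then the strategy $\mathcal{S}^+$ is a winning strategy for Maker in the game $\mathrm{MinDeg}^+\!\left(H,\frac{\varepsilon s'n}{b},b,\varepsilon\right)$.
   Context: $\log$ is the natural logarithm. For a multigraph $G$, real $d>0$, integer $b\geq 1$ and $\alpha\in(0,1)$, the game $\mathrm{MinDeg}^+(G,d,b,\alpha)$ is a $(1:b)$ Maker-Breaker game on the edges of $G$ in which Breaker moves first: in each round Breaker claims $b$ unclaimed edges and Maker claims one edge. Whenever Maker claims an edge she immediately gives it a direction; Maker is allowed to claim the same edge twice in two different rounds, so as to give it both directions. Let $d_M^+(v)$ denote Maker's outdegree at $v$, $d_B(v)$ the number of Breaker's edges at $v$, and $d_G(v)$ the degree of $v$ in $G$. Maker wins if for every vertex $v\in V(G)$ she reaches $d_M^+(v)=d$ before $d_B(v)\geq(1-\alpha)d_G(v)$ first happens. A vertex $v$ is called active as long as $d_M^+(v)<d$, and its danger is $\mathrm{dang}(v)=d_B(v)-2b\cdot d_M^+(v)$. Strategy $\mathcal{S}^+$: in every round Maker picks an active vertex $v$ of largest danger, claims an arbitrary edge at $v$ that is not claimed by Breaker and is not already an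 outgoing Maker edge at $v$, and directs it to be outgoing at $v$. *)

theory Defs
  imports Complex_Main
begin

text \<open>A multigraph is given by a vertex set V, a finite set E of edge identifiers
and a map ends assigning to each edge its (two-element) set of endpoints.
Maker's claims are stored as directed pairs (e, v), meaning that Maker has
claimed edge e and directed it to be outgoing at v.\<close>

definition deg_in :: "('e \<Rightarrow> 'v set) \<Rightarrow> 'e set \<Rightarrow> 'v \<Rightarrow> nat" where
  "deg_in ends F v = card {e \<in> F. v \<in> ends e}"

definition outdeg :: "('e \<times> 'v) set \<Rightarrow> 'v \<Rightarrow> nat" where
  "outdeg M v = card {e. (e, v) \<in> M}"

definition unclaimed :: "'e set \<Rightarrow> 'e set \<Rightarrow> ('e \<times> 'v) set \<Rightarrow> 'e set" where
  "unclaimed E B M = {e \<in> E. e \<notin> B \<and> (\<forall>u. (e, u) \<notin> M)}"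

definition breaker_move ::
  "'e set \<Rightarrow> nat \<Rightarrow> 'e set \<Rightarrow> ('e \<times> 'v) set \<Rightarrow> 'e set \<Rightarrow> bool" where
  "breaker_move E b B M B' \<longleftrightarrow>
     B \<subseteq> B' \<and> B' - B \<subseteq> unclaimed E B M \<and>
     card (B' - B) = min b (card (unclaimed E B M))"

definition active :: "real \<Rightarrow> ('e \<times> 'v) set \<Rightarrow> 'v \<Rightarrow> bool" where
  "active d M v \<longleftrightarrow> real (outdeg M v) < d"

definition dang :: "('e \<Rightarrow> 'v set) \<Rightarrow> nat \<Rightarrow> 'e set \<Rightarrow> ('e \<times> 'v) set \<Rightarrow> 'v \<Rightarrow> real" where
  "dang ends b B M v = real (deg_in ends B v) - 2 * real b * real (outdeg M v)"

definition splus_move ::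
  "'v set \<Rightarrow> 'e set \<Rightarrow> ('e \<Rightarrow> 'v set) \<Rightarrow> real \<Rightarrow> nat \<Rightarrow> 'e set \<Rightarrow> ('e \<times> 'v) set
     \<Rightarrow> ('e \<times> 'v) set \<Rightarrow> bool" where
  "splus_move V E ends d b B M M' \<longleftrightarrow>
     (\<exists>v e. v \<in> V \<and> active d M v \<and>
        (\<forall>u \<in> V. active d M u \<longrightarrow> dang ends b B M u \<le> dang ends b B M v) \<and>
        e \<in> E \<and> v \<in> ends e \<and> e \<notin> B \<and> (e, v) \<notin> M \<and> M' = insert (e, v) M)"

text \<open>Bs i = Breaker's edges after Breaker's move in round i;
  Ms i = Maker's arcs before round i (Ms (Suc i) after Maker's move in round i).\<close>
definition splus_play ::
  "'v set \<Rightarrow> 'e set \<Rightarrow> ('e \<Rightarrow> 'v set) \<Rightarrow> real \<Rightarrow> nat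
     \<Rightarrow> (nat \<Rightarrow> 'e set) \<Rightarrow> (nat \<Rightarrow> ('e \<times> 'v) set) \<Rightarrow> bool" where
  "splus_play V E ends d b Bs Ms \<longleftrightarrow>
     Ms 0 = {} \<and> breaker_move E b {} (Ms 0) (Bs 0) \<and>
     (\<forall>i. (if (\<exists>M'. splus_move V E ends d b (Bs i) (Ms i) M')
           then splus_move V E ends d b (Bs i) (Ms i) (Ms (Suc i))
           else Ms (Suc i) = Ms i) \<and>
          breaker_move E b (Bs i) (Ms (Suc i)) (Bs (Suc i)))"

definition maker_wins ::
  "'v set \<Rightarrow> 'e set \<Rightarrow> ('e \<Rightarrow> 'v set) \<Rightarrow> real \<Rightarrow> real
     \<Rightarrow> (nat \<Rightarrow> 'e set) \<Rightarrow> (nat \<Rightarrow> ('e \<times> 'v) set) \<Rightarrow> bool" where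
  "maker_wins V E ends d \<alpha> Bs Ms \<longleftrightarrow>
     (\<forall>v \<in> V. \<exists>t. real (outdeg (Ms t) v) \<ge> d \<and>
        (\<forall>i<t. real (deg_in ends (Bs i) v) < (1 - \<alpha>) * real (deg_in ends E v)))"

definition splus_winning ::
  "'v set \<Rightarrow> 'e set \<Rightarrow> ('e \<Rightarrow> 'v set) \<Rightarrow> real \<Rightarrow> nat \<Rightarrow> real \<Rightarrow> bool" where
  "splus_winning V E ends d b \<alpha> \<longleftrightarrow>
     (\<forall>Bs Ms. splus_play V E ends d b Bs Ms \<longrightarrow> maker_wins V E ends d \<alpha> Bs Ms)"

definition two_multicliques ::
  "'v set \<Rightarrow> 'v set \<Rightarrow> 'e set \<Rightarrow> ('e \<Rightarrow> 'v set) \<Rightarrow> nat \<Rightarrow> nat \<Rightarrow> bool" where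
  "two_multicliques V1 V2 E ends n s \<longleftrightarrow>
     finite V1 \<and> finite V2 \<and> card V1 = n \<and> card V2 = n \<and> V1 \<inter> V2 = {} \<and> finite E \<and>
     (\<forall>e \<in> E. card (ends e) = 2 \<and> (ends e \<subseteq> V1 \<or> ends e \<subseteq> V2)) \<and>
     (\<forall>x \<in> V1. \<forall>y \<in> V1. x \<noteq> y \<longrightarrow> card {e \<in> E. ends e = {x, y}} = s) \<and>
     (\<forall>x \<in> V2. \<forall>y \<in> V2. x \<noteq> y \<longrightarrow> card {e \<in> E. ends e = {x, y}} = s)"

end

theory Submission
  imports Defs "HOL-Analysis.Harmonic_Numbers" "HOL-Real_Asymp.Real_Asymp"
begin

text \<open>
  Under S+ every active vertex keeps danger below a threshold D for which an active vertex
  still has a free edge and Breaker has not yet claimed a (1 - \<epsilon>)-fraction of its edges;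
  hence Maker can always move, and a vertex leaves the game only by reaching outdegree d.

  Suppose an active vertex u reaches danger D in round T, and let A(i) consist of u and the
  vertices Maker plays in rounds i, ..., T - 1. Going back from T to 0, A(i) grows by at most
  one vertex per round, always by a vertex of maximal danger. Counting Breaker edges inside
  A(i) only once, at most s of them join the new vertex to each old one, so this merged average
  danger drops by at most b/k + s when A(i) grows to k + 1 vertices; until |A(i)| = m this
  costs b H(m - 1) + s m with H the harmonic numbers. Beyond m vertices the plain average
  danger, which dominates the merged one, drops by at most 2b/m per round, and at time 0 it
  is at most 2b. Hence
  D \<le> 2b + 2b|V|/m + b H(m - 1) + s m, which for m = \<lceil>\<epsilon> n\<rceil> and b \<le> (1 - \<delta>) s n / log n
  is smaller than the threshold.
\<close>

section \<open>Degrees in multigraphs\<close>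

lemma deg_in_Un_disjoint:
  assumes "finite B" "finite B'" "B \<inter> B' = {}"
  shows "deg_in ends (B \<union> B') u = deg_in ends B u + deg_in ends B' u"
proof -
  have "{e \<in> B \<union> B'. u \<in> ends e} = {e \<in> B. u \<in> ends e} \<union> {e \<in> B'. u \<in> ends e}" by auto
  then show ?thesis
    unfolding deg_in_def using assms by (simp add: card_Un_disjoint disjoint_iff)
qed

lemma sum_deg_in_eq_sum_card_ends:
  assumes "finite B" "finite A"
  shows "(\<Sum>u\<in>A. deg_in ends B u) = (\<Sum>e\<in>B. card (ends e \<inter> A))"
proof -
  have "(\<Sum>u\<in>A. deg_in ends B u) = (\<Sum>u\<in>A. \<Sum>e\<in>B. of_bool (u \<in> ends e))"
    unfolding deg_in_def using assms by (simp add: Collect_conj_eq Int_commute)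
  also have "\<dots> = (\<Sum>e\<in>B. \<Sum>u\<in>A. of_bool (u \<in> ends e))"
    by (rule sum.swap)
  also have "\<dots> = (\<Sum>e\<in>B. card (ends e \<inter> A))"
    using assms by (simp add: Int_commute Collect_mem_eq)
  finally show ?thesis .
qed

lemma sum_deg_in_le_twice_card:
  assumes "finite B" "finite A" "\<forall>e\<in>B. card (ends e) = 2"
  shows "(\<Sum>u\<in>A. deg_in ends B u) \<le> 2 * card B"
proof -
  have "card (ends e \<inter> A) \<le> 2" if "e \<in> B" for e
    using assms(3) that by (metis Int_lower1 card.infinite card_mono zero_neq_numeral)
  then have "(\<Sum>e\<in>B. card (ends e \<inter> A)) \<le> (\<Sum>e\<in>B. 2)"
    by (rule sum_mono)
  then show ?thesis
    using sum_deg_in_eq_sum_card_ends[OF assms(1,2)] by simp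
qed

lemma card_edges_meeting_le_sum_deg_in:
  assumes "finite B" "finite A"
  shows "card {e\<in>B. ends e \<inter> A \<noteq> {}} \<le> (\<Sum>u\<in>A. deg_in ends B u)"
proof -
  have "card {e\<in>B. ends e \<inter> A \<noteq> {}} = (\<Sum>e\<in>B. of_bool (ends e \<inter> A \<noteq> {}))"
    using assms by (simp add: Collect_conj_eq Int_commute)
  also have "\<dots> \<le> (\<Sum>e\<in>B. card (ends e \<inter> A))"
    using assms(2) by (intro sum_mono) (auto simp: Suc_leI card_gt_0_iff)
  finally show ?thesis
    using sum_deg_in_eq_sum_card_ends[OF assms] by simp
qed

lemma card_edges_meeting_insert:
  assumes "finite B"
  shows "card {e\<in>B. ends e \<inter> insert x A \<noteq> {}} + card {e\<in>B. x \<in> ends e \<and> ends e \<inter> A \<noteq> {}}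
       = card {e\<in>B. ends e \<inter> A \<noteq> {}} + deg_in ends B x"
proof -
  let ?meet = "{e\<in>B. ends e \<inter> A \<noteq> {}}"
  let ?new = "{e\<in>B. x \<in> ends e \<and> ends e \<inter> A = {}}"
  let ?both = "{e\<in>B. x \<in> ends e \<and> ends e \<inter> A \<noteq> {}}"
  have "{e\<in>B. ends e \<inter> insert x A \<noteq> {}} = ?meet \<union> ?new"
    and "{e\<in>B. x \<in> ends e} = ?both \<union> ?new" by auto
  moreover have "card (?meet \<union> ?new) = card ?meet + card ?new"
    and "card (?both \<union> ?new) = card ?both + card ?new"
    using assms by (auto intro: card_Un_disjoint)
  ultimately show ?thesis
    unfolding deg_in_def by simp
qed

lemma card_edges_at_meeting_le:
  assumes "finite E" "\<forall>e\<in>E. card (ends e) = 2" "B \<subseteq> E" "finite A" "x \<notin> A"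
    and multiplicity: "\<forall>y\<in>A. card {e\<in>E. ends e = {x, y}} \<le> s"
  shows "card {e\<in>B. x \<in> ends e \<and> ends e \<inter> A \<noteq> {}} \<le> s * card A"
proof -
  have "{e\<in>B. x \<in> ends e \<and> ends e \<inter> A \<noteq> {}} \<subseteq> (\<Union>y\<in>A. {e\<in>E. ends e = {x, y}})"
  proof
    fix e assume e: "e \<in> {e\<in>B. x \<in> ends e \<and> ends e \<inter> A \<noteq> {}}"
    then obtain y where "y \<in> ends e" "y \<in> A" by auto
    moreover have "e \<in> E" using e assms(3) by auto
    ultimately have "ends e = {x, y}"
      using e assms(2,5) by (auto simp: card_2_iff)
    then show "e \<in> (\<Union>y\<in>A. {e\<in>E. ends e = {x, y}})"
      using \<open>e \<in> E\<close> \<open>y \<in> A\<close> by auto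
  qed
  then have "card {e\<in>B. x \<in> ends e \<and> ends e \<inter> A \<noteq> {}} \<le> card (\<Union>y\<in>A. {e\<in>E. ends e = {x, y}})"
    by (intro card_mono finite_subset[OF _ assms(1)]) auto
  also have "\<dots> \<le> (\<Sum>y\<in>A. card {e\<in>E. ends e = {x, y}})"
    using assms(4) by (rule card_UN_le)
  also have "\<dots> \<le> s * card A"
    using sum_bounded_above[of A "\<lambda>y. card {e\<in>E. ends e = {x, y}}" s] multiplicity
    by (simp add: mult.commute)
  finally show ?thesis .
qed

lemma deg_in_ge_multiclique:
  assumes "finite E" "finite W" "x \<in> W"
    and "\<forall>y\<in>W. y \<noteq> x \<longrightarrow> card {e\<in>E. ends e = {x, y}} = s"
  shows "s * (card W - 1) \<le> deg_in ends E x"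
proof -
  let ?F = "\<lambda>y. {e\<in>E. ends e = {x, y}}"
  have "s * (card W - 1) = (\<Sum>y\<in>W - {x}. card (?F y))"
    using assms by simp
  also have "\<dots> = card (\<Union>y\<in>W - {x}. ?F y)"
    using assms(1,2) by (intro card_UN_disjoint[symmetric]) (auto simp: doubleton_eq_iff)
  also have "\<dots> \<le> deg_in ends E x"
    unfolding deg_in_def using assms(1) by (intro card_mono) auto
  finally show ?thesis .
qed

lemma finite_out_edges:
  assumes "finite M"
  shows "finite {e. (e, w) \<in> M}"
proof -
  have "{e. (e, w) \<in> M} \<subseteq> fst ` M"
    by force
  then show ?thesis
    using finite_imageI[OF assms, of fst] by (rule finite_subset)
qed

lemma outdeg_insert:
  assumes "finite M" "(e, x) \<notin> M"
  shows "outdeg (insert (e, x) M) w = outdeg M w + of_bool (w = x)"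
proof -
  have "{f. (f, x) \<in> insert (e, x) M} = insert e {f. (f, x) \<in> M}"
    by auto
  then show ?thesis
    unfolding outdeg_def using assms(2) finite_out_edges[OF assms(1), of x] by (cases "w = x") auto
qed

lemma outdeg_mono:
  assumes "M \<subseteq> M'" "finite M'"
  shows "outdeg M w \<le> outdeg M' w"
  unfolding outdeg_def using finite_out_edges[OF assms(2)] by (rule card_mono) (use assms(1) in auto)

section \<open>Danger of vertex sets\<close>

definition dang_sum :: "('e \<Rightarrow> 'v set) \<Rightarrow> nat \<Rightarrow> 'e set \<Rightarrow> ('e \<times> 'v) set \<Rightarrow> 'v set \<Rightarrow> real" where
  "dang_sum ends b B M A = (\<Sum>u\<in>A. dang ends b B M u)"

text \<open>The danger of A viewed as a single vertex: a Breaker edge with both ends in A counts once.\<close>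
definition dang_set :: "('e \<Rightarrow> 'v set) \<Rightarrow> nat \<Rightarrow> 'e set \<Rightarrow> ('e \<times> 'v) set \<Rightarrow> 'v set \<Rightarrow> real" where
  "dang_set ends b B M A =
     real (card {e\<in>B. ends e \<inter> A \<noteq> {}}) - 2 * real b * (\<Sum>u\<in>A. real (outdeg M u))"

lemma dang_sum_le_card_mult_max:
  assumes "\<forall>w\<in>A. dang ends b B M w \<le> dang ends b B M x"
  shows "dang_sum ends b B M A \<le> card A * dang ends b B M x"
  unfolding dang_sum_def using assms by (intro sum_bounded_above) auto

lemma dang_set_le_dang_sum:
  assumes "finite A" "finite B"
  shows "dang_set ends b B M A \<le> dang_sum ends b B M A"
proof -
  have "dang_sum ends b B M A
      = real (\<Sum>u\<in>A. deg_in ends B u) - 2 * real b * (\<Sum>u\<in>A. real (outdeg M u))"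
    unfolding dang_sum_def dang_def by (simp add: sum_subtractf sum_distrib_left)
  then show ?thesis
    unfolding dang_set_def using card_edges_meeting_le_sum_deg_in[OF assms(2,1), of ends]
    by (simp del: of_nat_sum)
qed

lemma dang_set_insert:
  assumes "finite A" "x \<notin> A" "finite B"
  shows "dang_set ends b B M (insert x A) = dang_set ends b B M A + dang ends b B M x
           - real (card {e\<in>B. x \<in> ends e \<and> ends e \<inter> A \<noteq> {}})"
  using arg_cong[OF card_edges_meeting_insert[OF assms(3), of ends x A], of real] assms(1,2)
  unfolding dang_set_def dang_def by (simp add: algebra_simps)

lemma dang_step:
  assumes "B \<subseteq> B'" "finite B'" "finite M" "(e, x) \<notin> M"
  shows "dang ends b B' (insert (e, x) M) u
           = dang ends b B M u + real (deg_in ends (B' - B) u) - 2 * real b * of_bool (u = x)"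
proof -
  have "B' = B \<union> (B' - B)" using assms(1) by auto
  then have "deg_in ends B' u = deg_in ends B u + deg_in ends (B' - B) u"
    using assms(2) deg_in_Un_disjoint[of B "B' - B" ends u] by (metis Diff_disjoint finite_Un)
  then show ?thesis
    unfolding dang_def outdeg_insert[OF assms(3,4)] by (simp add: algebra_simps)
qed

lemma dang_sum_step:
  assumes "B \<subseteq> B'" "finite B'" "finite M" "(e, x) \<notin> M" "finite A"
    and "\<forall>e\<in>B' - B. card (ends e) = 2"
  shows "dang_sum ends b B' (insert (e, x) M) A
           \<le> dang_sum ends b B M A + 2 * real (card (B' - B)) - 2 * real b * of_bool (x \<in> A)"
proof -
  have "dang_sum ends b B' (insert (e, x) M) A
      = dang_sum ends b B M A + real (\<Sum>u\<in>A. deg_in ends (B' - B) u) - 2 * real b * of_bool (x \<in> A)"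
    unfolding dang_sum_def dang_step[OF assms(1-4)] using assms(5)
    by (simp add: sum.distrib sum_subtractf of_bool_def flip: sum_distrib_left)
  moreover have "(\<Sum>u\<in>A. deg_in ends (B' - B) u) \<le> 2 * card (B' - B)"
    using assms(2,5,6) by (intro sum_deg_in_le_twice_card) auto
  ultimately show ?thesis by linarith
qed

lemma dang_set_step:
  assumes "B \<subseteq> B'" "finite B'" "finite M" "(e, x) \<notin> M" "finite A"
  shows "dang_set ends b B' (insert (e, x) M) A
           \<le> dang_set ends b B M A + real (card (B' - B)) - 2 * real b * of_bool (x \<in> A)"
proof -
  have "finite B"
    using assms(1,2) by (rule finite_subset)
  then have "card {e\<in>B'. ends e \<inter> A \<noteq> {}} \<le> card ({e\<in>B. ends e \<inter> A \<noteq> {}} \<union> (B' - B))"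
    using assms(2) by (intro card_mono) auto
  also have "\<dots> \<le> card {e\<in>B. ends e \<inter> A \<noteq> {}} + card (B' - B)"
    by (rule card_Un_le)
  finally have "card {e\<in>B'. ends e \<inter> A \<noteq> {}} \<le> card {e\<in>B. ends e \<inter> A \<noteq> {}} + card (B' - B)" .
  moreover have "(\<Sum>u\<in>A. real (outdeg (insert (e, x) M) u))
      = (\<Sum>u\<in>A. real (outdeg M u)) + of_bool (x \<in> A)"
    unfolding outdeg_insert[OF assms(3,4)] using assms(5) by (simp add: sum.distrib)
  ultimately show ?thesis
    unfolding dang_set_def by (simp add: algebra_simps)
qed

lemma mean_le_mean_insert_max:
  fixes S k y :: real
  assumes "0 < k" "S \<le> k * y"
  shows "S / k \<le> (S + y) / (k + 1)"
  using assms by (simp add: field_simps)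

lemma dang_sum_mean_step:
  assumes "B \<subseteq> B'" "finite B'" "finite M" "(e, x) \<notin> M" "finite A" "A \<noteq> {}"
    and "\<forall>e\<in>B' - B. card (ends e) = 2" "card (B' - B) \<le> b"
    and x_max: "\<forall>w\<in>A. dang ends b B M w \<le> dang ends b B M x"
  shows "dang_sum ends b B' (insert (e, x) M) A / card A
     \<le> dang_sum ends b B M (insert x A) / card (insert x A) + (if x \<in> A then 0 else 2 * real b / card A)"
proof -
  let ?k = "real (card A)"
  have k_pos: "?k > 0" using assms(5,6) by (simp add: card_gt_0_iff)
  have step: "dang_sum ends b B' (insert (e, x) M) A
      \<le> dang_sum ends b B M A + 2 * real b - 2 * real b * of_bool (x \<in> A)"
    using dang_sum_step[OF assms(1-5,7), of b] assms(8) by linarith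
  show ?thesis
  proof (cases "x \<in> A")
    case True
    then show ?thesis
      using step k_pos by (simp add: insert_absorb divide_right_mono)
  next
    case False
    have "dang_sum ends b B M A \<le> ?k * dang ends b B M x"
      using x_max by (rule dang_sum_le_card_mult_max)
    then have "dang_sum ends b B M A / ?k \<le> (dang_sum ends b B M A + dang ends b B M x) / (?k + 1)"
      by (rule mean_le_mean_insert_max[OF k_pos])
    also have "\<dots> = dang_sum ends b B M (insert x A) / (?k + 1)"
      using False assms(5) by (simp add: dang_sum_def add.commute)
    finally have "dang_sum ends b B M A / ?k \<le> dang_sum ends b B M (insert x A) / (?k + 1)" .
    moreover have "dang_sum ends b B' (insert (e, x) M) A / ?k
        \<le> dang_sum ends b B M A / ?k + 2 * real b / ?k"
      using step False k_pos by (simp add: divide_right_mono flip: add_divide_distrib)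
    ultimately show ?thesis
      using False assms(5) by (simp add: add.commute)
  qed
qed

lemma dang_set_mean_step:
  assumes "B \<subseteq> B'" "finite B'" "finite M" "(e, x) \<notin> M" "finite A" "A \<noteq> {}"
    and "card (B' - B) \<le> b"
    and x_max: "\<forall>w\<in>A. dang ends b B M w \<le> dang ends b B M x"
    and few_shared: "x \<notin> A \<Longrightarrow> card {e\<in>B. x \<in> ends e \<and> ends e \<inter> A \<noteq> {}} \<le> s * card A"
  shows "dang_set ends b B' (insert (e, x) M) A / card A
     \<le> dang_set ends b B M (insert x A) / card (insert x A)
        + (if x \<in> A then 0 else real b / card A + real s)"
proof -
  let ?k = "real (card A)"
  have k_pos: "?k > 0" using assms(5,6) by (simp add: card_gt_0_iff)
  have step: "dang_set ends b B' (insert (e, x) M) A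
      \<le> dang_set ends b B M A + real b - 2 * real b * of_bool (x \<in> A)"
    using dang_set_step[OF assms(1-5), of ends b] assms(7) by linarith
  show ?thesis
  proof (cases "x \<in> A")
    case True
    then show ?thesis
      using step k_pos by (simp add: insert_absorb divide_right_mono)
  next
    case False
    let ?c = "real (card {e\<in>B. x \<in> ends e \<and> ends e \<inter> A \<noteq> {}})"
    have "dang_set ends b B M A \<le> ?k * dang ends b B M x"
      using dang_set_le_dang_sum[OF assms(5) finite_subset[OF assms(1,2)]]
        dang_sum_le_card_mult_max[OF x_max] by (rule order_trans)
    then have "dang_set ends b B M A / ?k \<le> (dang_set ends b B M A + dang ends b B M x) / (?k + 1)"
      by (rule mean_le_mean_insert_max[OF k_pos])
    also have "\<dots> = (dang_set ends b B M (insert x A) + ?c) / (?k + 1)"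
      using dang_set_insert[OF assms(5) False finite_subset[OF assms(1,2)], of ends b M] by simp
    also have "\<dots> \<le> dang_set ends b B M (insert x A) / (?k + 1) + real s"
    proof -
      have "?c \<le> real s * (?k + 1)"
        using few_shared[OF False] by (simp add: distrib_left order_trans flip: of_nat_mult)
      then have "?c / (?k + 1) \<le> real s"
        using k_pos by (simp add: pos_divide_le_eq)
      then show ?thesis
        by (simp add: add_divide_distrib)
    qed
    finally have "dang_set ends b B M A / ?k \<le> dang_set ends b B M (insert x A) / (?k + 1) + real s" .
    moreover have "dang_set ends b B' (insert (e, x) M) A / ?k
        \<le> dang_set ends b B M A / ?k + real b / ?k"
      using step False k_pos by (simp add: divide_right_mono flip: add_divide_distrib)
    ultimately show ?thesis
      using False assms(5) by (simp add: add.commute)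
  qed
qed

section \<open>Plays of S+\<close>

lemma exists_free_edge_if_dang_lt:
  assumes "finite E" "finite M" "B \<subseteq> E" "active d M w"
    and "dang ends b B M w < real (deg_in ends E w) - (2 * real b + 1) * d"
  shows "\<exists>e\<in>E. w \<in> ends e \<and> e \<notin> B \<and> (e, w) \<notin> M"
proof (rule ccontr)
  assume "\<not> ?thesis"
  then have "{e\<in>E. w \<in> ends e} \<subseteq> {e\<in>B. w \<in> ends e} \<union> {e. (e, w) \<in> M}"
    by auto
  moreover have "finite ({e\<in>B. w \<in> ends e} \<union> {e. (e, w) \<in> M})"
    using finite_subset[OF assms(3,1)] finite_out_edges[OF assms(2)] by simp
  ultimately have "deg_in ends E w \<le> card ({e\<in>B. w \<in> ends e} \<union> {e. (e, w) \<in> M})"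
    unfolding deg_in_def by (rule card_mono[rotated])
  also have "\<dots> \<le> deg_in ends B w + outdeg M w"
    unfolding deg_in_def outdeg_def by (rule card_Un_le)
  moreover have "(2 * real b + 1) * real (outdeg M w) \<le> (2 * real b + 1) * d"
    using assms(4) unfolding active_def by (intro mult_left_mono) auto
  ultimately show False
    using assms(5) unfolding dang_def by (simp add: algebra_simps)
qed

locale splus_game =
  fixes V :: "'v set" and E :: "'e set" and ends :: "'e \<Rightarrow> 'v set" and d :: real and b :: nat
    and Bs :: "nat \<Rightarrow> 'e set" and Ms :: "nat \<Rightarrow> ('e \<times> 'v) set"
  assumes play: "splus_play V E ends d b Bs Ms"
    and finite_V: "finite V" and finite_E: "finite E"
    and card_ends: "\<And>e. e \<in> E \<Longrightarrow> card (ends e) = 2"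
begin

definition picks :: "nat \<Rightarrow> 'v \<Rightarrow> 'e \<Rightarrow> bool" where
  "picks i v e \<longleftrightarrow> v \<in> V \<and> active d (Ms i) v \<and>
     (\<forall>w\<in>V. active d (Ms i) w \<longrightarrow> dang ends b (Bs i) (Ms i) w \<le> dang ends b (Bs i) (Ms i) v) \<and>
     e \<in> E \<and> v \<in> ends e \<and> e \<notin> Bs i \<and> (e, v) \<notin> Ms i \<and> Ms (Suc i) = insert (e, v) (Ms i)"

lemma splus_move_iff_picks:
  "splus_move V E ends d b (Bs i) (Ms i) (Ms (Suc i)) \<longleftrightarrow> (\<exists>v e. picks i v e)"
  unfolding splus_move_def picks_def by blast

lemma Ms_0: "Ms 0 = {}"
  using play unfolding splus_play_def by blast

lemma breaker_move_0: "breaker_move E b {} (Ms 0) (Bs 0)"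
  using play unfolding splus_play_def by auto

lemma breaker_move_Suc: "breaker_move E b (Bs i) (Ms (Suc i)) (Bs (Suc i))"
  using play unfolding splus_play_def by blast

lemma splus_move_if_possible:
  "splus_move V E ends d b (Bs i) (Ms i) M' \<Longrightarrow> splus_move V E ends d b (Bs i) (Ms i) (Ms (Suc i))"
  using play unfolding splus_play_def by (metis (full_types))

lemma Ms_Suc_cases:
  "splus_move V E ends d b (Bs i) (Ms i) (Ms (Suc i)) \<or> Ms (Suc i) = Ms i"
  using play unfolding splus_play_def by (metis (full_types))

lemma Bs_subset_E: "Bs i \<subseteq> E"
proof (induction i)
  case 0
  then show ?case using breaker_move_0 unfolding breaker_move_def unclaimed_def by auto
next
  case (Suc i)
  then show ?case using breaker_move_Suc[of i] unfolding breaker_move_def unclaimed_def by auto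
qed

lemma finite_Bs: "finite (Bs i)"
  using Bs_subset_E finite_E by (rule finite_subset)

lemma Bs_subset_Suc: "Bs i \<subseteq> Bs (Suc i)"
  and card_Bs_Suc_diff_le: "card (Bs (Suc i) - Bs i) \<le> b"
  using breaker_move_Suc[of i] unfolding breaker_move_def by auto

lemma card_Bs_0_le: "card (Bs 0) \<le> b"
  using breaker_move_0 unfolding breaker_move_def by auto

lemma Ms_subset: "Ms i \<subseteq> E \<times> V"
proof (induction i)
  case 0
  then show ?case using Ms_0 by simp
next
  case (Suc i)
  then show ?case using Ms_Suc_cases[of i] unfolding splus_move_def by auto
qed

lemma finite_Ms: "finite (Ms i)"
  using Ms_subset finite_E finite_V by (meson finite_SigmaI finite_subset)

lemma Ms_subset_Suc: "Ms i \<subseteq> Ms (Suc i)"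
  using Ms_Suc_cases[of i] unfolding splus_move_def by auto

lemma Ms_mono: "i \<le> j \<Longrightarrow> Ms i \<subseteq> Ms j"
  by (rule lift_Suc_mono_le[of Ms, OF Ms_subset_Suc])

lemma active_antimono:
  assumes "i \<le> j" "active d (Ms j) w"
  shows "active d (Ms i) w"
proof -
  have "real (outdeg (Ms i) w) \<le> real (outdeg (Ms j) w)"
    using outdeg_mono[OF Ms_mono[OF assms(1)] finite_Ms] by simp
  then show ?thesis
    using assms(2) unfolding active_def by linarith
qed

lemma splus_move_if_dang_lt:
  assumes "\<exists>w\<in>V. active d (Ms i) w"
    and "\<And>w. w \<in> V \<Longrightarrow> active d (Ms i) w \<Longrightarrow>
           dang ends b (Bs i) (Ms i) w < real (deg_in ends E w) - (2 * real b + 1) * d"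
  shows "splus_move V E ends d b (Bs i) (Ms i) (Ms (Suc i))"
proof -
  let ?act = "{w\<in>V. active d (Ms i) w}" and ?dang = "dang ends b (Bs i) (Ms i)"
  have fin: "finite (?dang ` ?act)"
    using finite_V by simp
  moreover have "?dang ` ?act \<noteq> {}"
    using assms(1) by blast
  ultimately have "Max (?dang ` ?act) \<in> ?dang ` ?act"
    by (rule Max_in)
  then obtain v where v: "v \<in> ?act" "?dang v = Max (?dang ` ?act)"
    by auto
  then have "\<forall>w\<in>?act. ?dang w \<le> ?dang v"
    using fin by simp
  moreover obtain e where "e \<in> E" "v \<in> ends e" "e \<notin> Bs i" "(e, v) \<notin> Ms i"
    using exists_free_edge_if_dang_lt[OF finite_E finite_Ms Bs_subset_E] v(1) assms(2) by blast
  ultimately have "splus_move V E ends d b (Bs i) (Ms i) (insert (e, v) (Ms i))"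
    unfolding splus_move_def using v(1) by blast
  then show ?thesis by (rule splus_move_if_possible)
qed

lemma card_Ms_if_moves:
  assumes "\<And>i. i < t \<Longrightarrow> splus_move V E ends d b (Bs i) (Ms i) (Ms (Suc i))"
  shows "card (Ms t) = t"
  using assms
proof (induction t)
  case 0
  then show ?case by (simp add: Ms_0)
next
  case (Suc t)
  then obtain e w where "Ms (Suc t) = insert (e, w) (Ms t)" "(e, w) \<notin> Ms t"
    unfolding splus_move_def by blast
  then show ?case using Suc finite_Ms[of t] by simp
qed

end

section \<open>Potentials along a play\<close>

locale splus_history = splus_game V E ends d b Bs Ms
  for V :: "'v set" and E :: "'e set" and ends d b Bs Ms +
  fixes s :: nat and T :: nat and u :: 'v and vv :: "nat \<Rightarrow> 'v" and ee :: "nat \<Rightarrow> 'e"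
  assumes multiplicity: "\<And>x y. x \<in> V \<Longrightarrow> y \<in> V \<Longrightarrow> x \<noteq> y \<Longrightarrow> card {e\<in>E. ends e = {x, y}} \<le> s"
    and u_in_V: "u \<in> V" and u_active: "active d (Ms T) u"
    and picks_vv_ee: "\<And>i. i < T \<Longrightarrow> picks i (vv i) (ee i)"
begin

definition remaining :: "nat \<Rightarrow> 'v set" where
  "remaining i = insert u (vv ` {i..<T})"

definition mean_dang :: "nat \<Rightarrow> real" where
  "mean_dang i = dang_sum ends b (Bs i) (Ms i) (remaining i) / card (remaining i)"

definition mean_dang_set :: "nat \<Rightarrow> real" where
  "mean_dang_set i = dang_set ends b (Bs i) (Ms i) (remaining i) / card (remaining i)"

lemma finite_remaining: "finite (remaining i)"
  unfolding remaining_def by simp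

lemma card_remaining_pos: "card (remaining i) \<ge> 1"
  using finite_remaining unfolding remaining_def by (simp add: Suc_leI card_gt_0_iff)

lemma remaining_nonempty: "remaining i \<noteq> {}"
  unfolding remaining_def by simp

lemma remaining_Suc:
  assumes "i < T"
  shows "remaining i = insert (vv i) (remaining (Suc i))"
proof -
  have "{i..<T} = insert i {Suc i..<T}"
    using assms by auto
  then show ?thesis
    unfolding remaining_def by auto
qed

lemma remaining_T: "remaining T = {u}"
  unfolding remaining_def by simp

lemma card_remaining_Suc:
  "i < T \<Longrightarrow> card (remaining i) = card (remaining (Suc i)) + of_bool (vv i \<notin> remaining (Suc i))"
  using remaining_Suc finite_remaining by (simp add: insert_absorb)

lemma remaining_subset_V: "remaining i \<subseteq> V"
  using u_in_V picks_vv_ee unfolding remaining_def picks_def by auto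

lemma active_remaining:
  assumes "w \<in> remaining i" "i \<le> T"
  shows "active d (Ms i) w"
proof -
  consider "w = u" | j where "i \<le> j" "j < T" "w = vv j"
    using assms(1) unfolding remaining_def by auto
  then show ?thesis
  proof cases
    case 1
    then show ?thesis using active_antimono[OF assms(2)] u_active by simp
  next
    case 2
    then show ?thesis using active_antimono[of i j] picks_vv_ee unfolding picks_def by auto
  qed
qed

lemma dang_le_dang_vv:
  assumes "i < T"
  shows "\<forall>w\<in>remaining (Suc i). dang ends b (Bs i) (Ms i) w \<le> dang ends b (Bs i) (Ms i) (vv i)"
proof
  fix w assume "w \<in> remaining (Suc i)"
  then have "w \<in> V" "active d (Ms i) w"
    using remaining_subset_V active_remaining[of w i] remaining_Suc[OF assms] assms by auto
  then show "dang ends b (Bs i) (Ms i) w \<le> dang ends b (Bs i) (Ms i) (vv i)"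
    using picks_vv_ee[OF assms] unfolding picks_def by blast
qed

lemma picks_step:
  assumes "i < T"
  shows "Ms (Suc i) = insert (ee i, vv i) (Ms i)" "(ee i, vv i) \<notin> Ms i"
  using picks_vv_ee[OF assms] unfolding picks_def by auto

lemma card_ends_new_Bs: "\<forall>e\<in>Bs (Suc i) - Bs i. card (ends e) = 2"
  using card_ends Bs_subset_E by blast

lemma mean_dang_Suc_le:
  assumes "i < T"
  shows "mean_dang (Suc i)
    \<le> mean_dang i + (if vv i \<in> remaining (Suc i) then 0 else 2 * real b / card (remaining (Suc i)))"
  using dang_sum_mean_step[OF Bs_subset_Suc finite_Bs finite_Ms picks_step(2)[OF assms]
      finite_remaining remaining_nonempty card_ends_new_Bs card_Bs_Suc_diff_le dang_le_dang_vv[OF assms]]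
  unfolding mean_dang_def remaining_Suc[OF assms] picks_step(1)[OF assms] by simp

lemma few_shared_edges:
  assumes "i < T" "vv i \<notin> remaining (Suc i)"
  shows "card {e\<in>Bs i. vv i \<in> ends e \<and> ends e \<inter> remaining (Suc i) \<noteq> {}}
           \<le> s * card (remaining (Suc i))"
proof (rule card_edges_at_meeting_le[OF finite_E _ Bs_subset_E finite_remaining assms(2)])
  show "\<forall>e\<in>E. card (ends e) = 2"
    using card_ends by blast
  have "vv i \<in> V"
    using picks_vv_ee[OF assms(1)] unfolding picks_def by blast
  then show "\<forall>y\<in>remaining (Suc i). card {e\<in>E. ends e = {vv i, y}} \<le> s"
    using multiplicity remaining_subset_V assms(2) by blast
qed

lemma mean_dang_set_Suc_le:
  assumes "i < T"
  shows "mean_dang_set (Suc i) \<le> mean_dang_set i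
    + (if vv i \<in> remaining (Suc i) then 0 else real b / card (remaining (Suc i)) + real s)"
  using dang_set_mean_step[OF Bs_subset_Suc finite_Bs finite_Ms picks_step(2)[OF assms]
      finite_remaining remaining_nonempty card_Bs_Suc_diff_le dang_le_dang_vv[OF assms]
      few_shared_edges[OF assms]]
  unfolding mean_dang_set_def remaining_Suc[OF assms] picks_step(1)[OF assms] by simp

lemma mean_dang_set_le_mean_dang: "mean_dang_set i \<le> mean_dang i"
  unfolding mean_dang_set_def mean_dang_def
  by (intro divide_right_mono dang_set_le_dang_sum finite_remaining finite_Bs) simp

lemma mean_dang_0_le: "mean_dang 0 \<le> 2 * real b"
proof -
  have "dang_sum ends b (Bs 0) (Ms 0) (remaining 0) = real (\<Sum>w\<in>remaining 0. deg_in ends (Bs 0) w)"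
    unfolding dang_sum_def dang_def outdeg_def Ms_0 by simp
  also have "\<dots> \<le> 2 * real b"
  proof -
    have "\<forall>e\<in>Bs 0. card (ends e) = 2"
      using card_ends Bs_subset_E by blast
    then have "(\<Sum>w\<in>remaining 0. deg_in ends (Bs 0) w) \<le> 2 * card (Bs 0)"
      by (rule sum_deg_in_le_twice_card[OF finite_Bs finite_remaining])
    also have "\<dots> \<le> 2 * b"
      using card_Bs_0_le by simp
    finally show ?thesis
      by (metis of_nat_le_iff of_nat_mult of_nat_numeral)
  qed
  also have "\<dots> \<le> 2 * real b * card (remaining 0)"
    using card_remaining_pos[of 0] by (simp add: mult_le_cancel_left1)
  finally show ?thesis
    unfolding mean_dang_def using card_remaining_pos[of 0] by (simp add: pos_divide_le_eq)
qed

lemma mean_dang_set_T: "mean_dang_set T = dang ends b (Bs T) (Ms T) u"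
  unfolding mean_dang_set_def dang_set_def dang_def deg_in_def remaining_T by simp

text \<open>The harmonic term pays for the loss b/k when the set grows from k to k + 1 vertices.\<close>
definition dang_set_potential :: "nat \<Rightarrow> real" where
  "dang_set_potential i = mean_dang_set i + real b * harm (card (remaining i) - 1)
     + real s * card (remaining i)"

definition dang_potential :: "nat \<Rightarrow> nat \<Rightarrow> real" where
  "dang_potential m i = mean_dang i + 2 * real b * card (remaining i) / m"

lemma dang_set_potential_Suc_le:
  assumes "i < T"
  shows "dang_set_potential (Suc i) \<le> dang_set_potential i"
proof (cases "vv i \<in> remaining (Suc i)")
  case True
  then show ?thesis
    using mean_dang_set_Suc_le[OF assms] card_remaining_Suc[OF assms]
    unfolding dang_set_potential_def by simp
next
  case False
  obtain n where n: "card (remaining (Suc i)) = Suc n"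
    using card_remaining_pos[of "Suc i"] by (cases "card (remaining (Suc i))") auto
  then have "harm (card (remaining i) - 1) = harm (card (remaining (Suc i)) - 1) + 1 / real (Suc n)"
    using card_remaining_Suc[OF assms] False by (simp add: harm_Suc inverse_eq_divide)
  then show ?thesis
    using mean_dang_set_Suc_le[OF assms] card_remaining_Suc[OF assms] False n
    unfolding dang_set_potential_def by (simp add: algebra_simps)
qed

lemma dang_potential_Suc_le:
  assumes "i < T" "1 \<le> m" "m \<le> card (remaining (Suc i))"
  shows "dang_potential m (Suc i) \<le> dang_potential m i"
proof (cases "vv i \<in> remaining (Suc i)")
  case True
  then show ?thesis
    using mean_dang_Suc_le[OF assms(1)] card_remaining_Suc[OF assms(1)]
    unfolding dang_potential_def by simp
next
  case False
  have "2 * real b / card (remaining (Suc i)) \<le> 2 * real b / m"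
    using assms(2,3) by (intro divide_left_mono) auto
  then show ?thesis
    using mean_dang_Suc_le[OF assms(1)] card_remaining_Suc[OF assms(1)] False
    unfolding dang_potential_def by (simp add: add_divide_distrib algebra_simps)
qed

lemma dang_le_dang_set_potential:
  assumes "j \<le> T" "card (remaining j) \<le> m"
  shows "dang ends b (Bs T) (Ms T) u \<le> mean_dang_set j + real b * harm (m - 1) + real s * m"
proof -
  have "dang ends b (Bs T) (Ms T) u \<le> dang_set_potential T"
    using remaining_T unfolding dang_set_potential_def mean_dang_set_T by (simp add: harm_nonneg)
  also have "\<dots> \<le> dang_set_potential j"
    using lift_Suc_antimono_le_ivl[of "{j..<T}" dang_set_potential j T] assms(1)
      dang_set_potential_Suc_le by simp
  also have "\<dots> \<le> mean_dang_set j + real b * harm (m - 1) + real s * m"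
  proof -
    have "harm (card (remaining j) - 1) \<le> (harm (m - 1) :: real)"
      using assms(2) by (intro harm_mono) simp
    then show ?thesis
      using assms(2) unfolding dang_set_potential_def by (intro add_mono mult_left_mono) auto
  qed
  finally show ?thesis .
qed

lemma dang_potential_le:
  assumes "1 \<le> m" "j \<le> T" "\<And>i. i < j \<Longrightarrow> m \<le> card (remaining (Suc i))"
  shows "dang_potential m j \<le> 2 * real b + 2 * real b * card V / m"
proof -
  have "dang_potential m j \<le> dang_potential m 0"
    using lift_Suc_antimono_le_ivl[of "{0..<j}" "dang_potential m" 0 j] assms
      dang_potential_Suc_le by simp
  moreover have "card (remaining 0) \<le> card V"
    using remaining_subset_V finite_V by (rule card_mono[rotated])
  then have "2 * real b * card (remaining 0) / m \<le> 2 * real b * card V / m"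
    by (intro divide_right_mono mult_left_mono) auto
  ultimately show ?thesis
    using mean_dang_0_le unfolding dang_potential_def by simp
qed

lemma dang_le_potential_bound:
  assumes "1 \<le> m"
  shows "dang ends b (Bs T) (Ms T) u
           \<le> 2 * real b + 2 * real b * card V / m + real b * harm (m - 1) + real s * m"
proof -
  define j where "j = (LEAST i. card (remaining i) \<le> m)"
  have "card (remaining T) \<le> m"
    using assms remaining_T by simp
  then have j: "card (remaining j) \<le> m" "j \<le> T"
    unfolding j_def by (auto intro: LeastI Least_le)
  have "m \<le> card (remaining (Suc i))" if "i < j" for i
  proof -
    have "\<not> card (remaining i) \<le> m"
      using not_less_Least[OF that[unfolded j_def]] .
    then show ?thesis
      using card_remaining_Suc[of i] that j(2) by (cases "vv i \<in> remaining (Suc i)") auto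
  qed
  then have "dang_potential m j \<le> 2 * real b + 2 * real b * card V / m"
    using dang_potential_le assms j(2) by blast
  moreover have "mean_dang_set j \<le> dang_potential m j"
    unfolding dang_potential_def by (intro add_increasing2 mean_dang_set_le_mean_dang) simp
  ultimately show ?thesis
    using dang_le_dang_set_potential[OF j(2,1)] by linarith
qed

end

section \<open>Maker wins below the danger threshold\<close>

locale splus_threshold = splus_game V E ends d b Bs Ms
  for V :: "'v set" and E :: "'e set" and ends d b Bs Ms +
  fixes s m :: nat and D :: real
  assumes multiplicity: "\<And>x y. x \<in> V \<Longrightarrow> y \<in> V \<Longrightarrow> x \<noteq> y \<Longrightarrow> card {e\<in>E. ends e = {x, y}} \<le> s"
    and m_pos: "1 \<le> m"
    and potential_bound_lt: "2 * real b + 2 * real b * card V / m + real b * harm (m - 1) + real s * m < D"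
    and threshold: "\<And>w. w \<in> V \<Longrightarrow> D \<le> real (deg_in ends E w) - (2 * real b + 1) * d"
begin

lemma dang_lt_threshold: "u \<in> V \<Longrightarrow> active d (Ms t) u \<Longrightarrow> dang ends b (Bs t) (Ms t) u < D"
proof (induction t arbitrary: u rule: less_induct)
  case (less T)
  have "\<exists>v e. picks i v e" if "i < T" for i
    unfolding splus_move_iff_picks[symmetric]
  proof (rule splus_move_if_dang_lt)
    show "\<exists>w\<in>V. active d (Ms i) w"
      using less.prems active_antimono[of i T] that by auto
    show "dang ends b (Bs i) (Ms i) w < real (deg_in ends E w) - (2 * real b + 1) * d"
      if "w \<in> V" "active d (Ms i) w" for w
      using less.IH[OF \<open>i < T\<close> that] threshold[OF that(1)] by linarith
  qed
  then obtain vv ee where "\<And>i. i < T \<Longrightarrow> picks i (vv i) (ee i)"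
    by metis
  then interpret history: splus_history V E ends d b Bs Ms s T u vv ee
    using multiplicity less.prems by unfold_locales auto
  show ?case
    using history.dang_le_potential_bound[OF m_pos] potential_bound_lt by linarith
qed

lemma eventually_inactive:
  assumes "v \<in> V"
  shows "\<exists>t. \<not> active d (Ms t) v"
proof (rule ccontr)
  assume "\<nexists>t. \<not> active d (Ms t) v"
  then have "splus_move V E ends d b (Bs i) (Ms i) (Ms (Suc i))" for i
  proof (intro splus_move_if_dang_lt)
    show "dang ends b (Bs i) (Ms i) w < real (deg_in ends E w) - (2 * real b + 1) * d"
      if "w \<in> V" "active d (Ms i) w" for w
      using dang_lt_threshold[OF that] threshold[OF that(1)] by linarith
  qed (use assms in auto)
  then have "card (Ms (Suc (card (E \<times> V)))) = Suc (card (E \<times> V))"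
    by (intro card_Ms_if_moves)
  moreover have "card (Ms (Suc (card (E \<times> V)))) \<le> card (E \<times> V)"
    using Ms_subset finite_E finite_V by (intro card_mono) auto
  ultimately show False
    by simp
qed

lemma maker_wins_if_threshold:
  assumes threshold_\<alpha>: "\<And>w. w \<in> V \<Longrightarrow> D \<le> (1 - \<alpha>) * real (deg_in ends E w) - 2 * real b * d"
  shows "maker_wins V E ends d \<alpha> Bs Ms"
  unfolding maker_wins_def
proof
  fix v assume v: "v \<in> V"
  define t where "t = (LEAST t. \<not> active d (Ms t) v)"
  have "\<not> active d (Ms t) v"
    unfolding t_def using eventually_inactive[OF v] by (rule LeastI_ex)
  moreover have "real (deg_in ends (Bs i) v) < (1 - \<alpha>) * real (deg_in ends E v)" if "i < t" for i
  proof -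
    have "active d (Ms i) v"
      using not_less_Least[OF that[unfolded t_def]] by simp
    then have "2 * real b * real (outdeg (Ms i) v) \<le> 2 * real b * d"
      unfolding active_def by (intro mult_left_mono) auto
    then show ?thesis
      using dang_lt_threshold[OF v \<open>active d (Ms i) v\<close>] threshold_\<alpha>[OF v]
      unfolding dang_def by linarith
  qed
  ultimately show "\<exists>t. d \<le> real (outdeg (Ms t) v) \<and>
      (\<forall>i<t. real (deg_in ends (Bs i) v) < (1 - \<alpha>) * real (deg_in ends E v))"
    unfolding active_def by (intro exI[of _ t]) auto
qed

end

theorem splus_winning_if_threshold:
  assumes "finite V" "finite E" "\<And>e. e \<in> E \<Longrightarrow> card (ends e) = 2"
    and "\<And>x y. x \<in> V \<Longrightarrow> y \<in> V \<Longrightarrow> x \<noteq> y \<Longrightarrow> card {e\<in>E. ends e = {x, y}} \<le> s"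
    and "1 \<le> m"
    and "2 * real b + 2 * real b * card V / m + real b * harm (m - 1) + real s * m < D"
    and "\<And>w. w \<in> V \<Longrightarrow> D \<le> real (deg_in ends E w) - (2 * real b + 1) * d"
      "\<And>w. w \<in> V \<Longrightarrow> D \<le> (1 - \<alpha>) * real (deg_in ends E w) - 2 * real b * d"
  shows "splus_winning V E ends d b \<alpha>"
  unfolding splus_winning_def
proof (intro allI impI)
  fix Bs Ms assume "splus_play V E ends d b Bs Ms"
  then interpret splus_threshold V E ends d b Bs Ms s m D
    using assms(1-7) by unfold_locales
  show "maker_wins V E ends d \<alpha> Bs Ms"
    using maker_wins_if_threshold assms(8) by blast
qed

section \<open>Two multicliques\<close>

lemma two_multicliques_finite_card_ends:
  assumes "two_multicliques V1 V2 E ends n s"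
  shows "finite (V1 \<union> V2)" "finite E" "\<And>e. e \<in> E \<Longrightarrow> card (ends e) = 2"
  using assms unfolding two_multicliques_def by auto

lemma two_multicliques_card: "two_multicliques V1 V2 E ends n s \<Longrightarrow> card (V1 \<union> V2) = 2 * n"
  unfolding two_multicliques_def by (simp add: card_Un_disjoint)

lemma two_multicliques_multiplicity:
  assumes "two_multicliques V1 V2 E ends n s" "x \<in> V1 \<union> V2" "y \<in> V1 \<union> V2" "x \<noteq> y"
  shows "card {e\<in>E. ends e = {x, y}} \<le> s"
proof (cases "x \<in> V1 \<and> y \<in> V1 \<or> x \<in> V2 \<and> y \<in> V2")
  case True
  then show ?thesis using assms unfolding two_multicliques_def by auto
next
  case False
  then have "{e\<in>E. ends e = {x, y}} = {}"
    using assms(1) unfolding two_multicliques_def by fastforce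
  then show ?thesis
    by (metis card.empty le0)
qed

lemma two_multicliques_deg_in:
  assumes "two_multicliques V1 V2 E ends n s" "x \<in> V1 \<union> V2"
  shows "real s * (real n - 1) \<le> real (deg_in ends E x)"
proof -
  obtain W where W: "W = V1 \<or> W = V2" "x \<in> W"
    using assms(2) by blast
  then have "finite W" "card W = n" "\<forall>y\<in>W. y \<noteq> x \<longrightarrow> card {e\<in>E. ends e = {x, y}} = s"
    using assms(1) unfolding two_multicliques_def by auto
  moreover have "1 \<le> n"
    using W(2) \<open>finite W\<close> \<open>card W = n\<close> by (auto simp: Suc_le_eq card_gt_0_iff)
  moreover have "s * (card W - 1) \<le> deg_in ends E x"
    using assms(1) W(2) \<open>finite W\<close> \<open>\<forall>y\<in>W. y \<noteq> x \<longrightarrow> card {e\<in>E. ends e = {x, y}} = s\<close>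
    unfolding two_multicliques_def by (intro deg_in_ge_multiclique) auto
  then have "s * (n - 1) \<le> deg_in ends E x"
    using \<open>card W = n\<close> by simp
  then have "real (s * (n - 1)) \<le> real (deg_in ends E x)"
    by (rule of_nat_mono)
  ultimately show ?thesis
    by (simp add: of_nat_diff)
qed

lemma harm_le_one_plus_ln: "1 \<le> n \<Longrightarrow> harm n \<le> 1 + ln (real n)"
  using euler_mascheroni_sequence_decreasing[of 1 n] by (simp add: harm_def)

lemma potential_bound_le:
  fixes \<epsilon> :: real and n s b m :: nat
  assumes "0 < \<epsilon>" "\<epsilon> * n \<le> m" "m \<le> \<epsilon> * n + 1" "1 \<le> m" "m \<le> n"
  shows "2 * real b + 2 * real b * real (2 * n) / m + real b * harm (m - 1) + real s * m
           \<le> real b * (3 + 4 / \<epsilon>) + real b * ln n + \<epsilon> * (s * n) + s"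
proof -
  have "harm (m - 1) \<le> (harm m :: real)"
    by (rule harm_mono) simp
  also have "\<dots> \<le> 1 + ln n"
  proof -
    have "ln (real m) \<le> ln n"
      using assms(4,5) by simp
    then show ?thesis
      using harm_le_one_plus_ln[OF assms(4)] by linarith
  qed
  finally have "real b * harm (m - 1) \<le> real b + real b * ln n"
    using mult_left_mono[of "harm (m - 1)" "1 + ln n" "real b"] by (simp add: distrib_left)
  moreover have "real (2 * n) / m \<le> 2 / \<epsilon>"
    using assms(1,2,4) by (simp add: field_simps)
  then have "2 * real b * real (2 * n) / m \<le> 4 * real b / \<epsilon>"
    using mult_left_mono[of "real (2 * n) / m" "2 / \<epsilon>" "2 * real b"] by simp
  moreover have "real s * m \<le> \<epsilon> * (s * n) + s"
    using mult_left_mono[OF assms(3), of "real s"] by (simp add: algebra_simps)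
  moreover have "real b * (3 + 4 / \<epsilon>) = 3 * real b + 4 * real b / \<epsilon>"
    by (simp add: algebra_simps)
  ultimately show ?thesis
    by linarith
qed

lemma breaker_bias_bounds:
  fixes \<delta> C :: real and n s b :: nat
  assumes "0 < \<delta>" "0 < C" "4 * C / \<delta> \<le> ln n" "real b \<le> (1 - \<delta>) * s * n / ln n"
  shows "real b * ln n \<le> (1 - \<delta>) * (s * n)" "real b * C \<le> \<delta> / 4 * (s * n)"
proof -
  have "0 < 4 * C / \<delta>"
    using assms(1,2) by simp
  then have "ln n > 0"
    using assms(3) by linarith
  then show b_ln: "real b * ln n \<le> (1 - \<delta>) * (s * n)"
    using assms(4) by (simp add: pos_le_divide_eq mult.assoc)
  have "C = \<delta> / 4 * (4 * C / \<delta>)"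
    using assms(1) by simp
  also have "\<dots> \<le> \<delta> / 4 * ln n"
    using assms(1,3) by (intro mult_left_mono) auto
  finally have "real b * C \<le> real b * (\<delta> / 4 * ln n)"
    by (rule mult_left_mono) simp
  also have "\<dots> = \<delta> / 4 * (real b * ln n)"
    by simp
  also have "\<dots> \<le> \<delta> / 4 * (s * n)"
  proof -
    have "0 \<le> \<delta> * (s * n)"
      using assms(1) by simp
    then have "(1 - \<delta>) * (s * n) \<le> s * n"
      by (simp add: algebra_simps)
    then show ?thesis
      using b_ln assms(1) by (intro mult_left_mono) auto
  qed
  finally show "real b * C \<le> \<delta> / 4 * (s * n)" .
qed

lemma potential_bound_lt_threshold:
  fixes \<delta> \<epsilon> :: real and n s b m :: nat
  assumes "0 < \<epsilon>" "\<epsilon> < \<delta> / 10" "1 \<le> s"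
    and large: "4 * (3 + 4 / \<epsilon>) / \<delta> \<le> ln n" "8 / \<delta> \<le> n"
    and b_le: "real b \<le> (1 - \<delta>) * s * n / ln n"
    and m: "\<epsilon> * n \<le> m" "m \<le> \<epsilon> * n + 1" "1 \<le> m" "m \<le> n"
  shows "2 * real b + 2 * real b * real (2 * n) / m + real b * harm (m - 1) + real s * m
           < (1 - \<epsilon>) * (s * (real n - 1)) - 3 * \<epsilon> * s * n"
proof -
  have \<delta>_pos: "\<delta> > 0"
    using assms(1,2) by linarith
  have "0 < 3 + 4 / \<epsilon>"
    using assms(1) by (intro add_pos_pos) simp_all
  note budget = breaker_bias_bounds[OF \<delta>_pos this large(1) b_le]
  have "0 < real n"
    using large(2) \<delta>_pos divide_pos_pos[of 8 \<delta>] by linarith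
  then have "n * (\<delta> / 4) < n * (3 * \<delta> / 4 - 5 * \<epsilon>)"
    using assms(2) by (intro mult_strict_left_mono) auto
  moreover have "2 \<le> n * (\<delta> / 4)"
    using large(2) \<delta>_pos by (simp add: field_simps)
  ultimately have "0 < s * (n * (3 * \<delta> / 4 - 5 * \<epsilon>) - 2) + \<epsilon> * s"
    using assms(1,3) by (simp add: add_pos_pos)
  moreover have "(1 - \<epsilon>) * (s * (real n - 1)) - 3 * \<epsilon> * s * n
      = \<delta> / 4 * (s * n) + (1 - \<delta>) * (s * n) + \<epsilon> * (s * n) + s
        + (s * (n * (3 * \<delta> / 4 - 5 * \<epsilon>) - 2) + \<epsilon> * s)"
    by (simp add: algebra_simps)
  ultimately show ?thesis
    using potential_bound_le[OF assms(1) m, of b s] budget by linarith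
qed

lemma nat_ceiling_mult_bounds:
  fixes \<epsilon> :: real
  assumes "0 < \<epsilon>" "\<epsilon> \<le> 1" "1 \<le> n"
  shows "\<epsilon> * n \<le> nat \<lceil>\<epsilon> * n\<rceil>" "nat \<lceil>\<epsilon> * n\<rceil> \<le> \<epsilon> * n + 1"
    and "1 \<le> nat \<lceil>\<epsilon> * n\<rceil>" "nat \<lceil>\<epsilon> * n\<rceil> \<le> n"
proof -
  have pos: "0 < \<epsilon> * n"
    using assms by simp
  show "\<epsilon> * n \<le> nat \<lceil>\<epsilon> * n\<rceil>"
    by (rule real_nat_ceiling_ge)
  show "nat \<lceil>\<epsilon> * n\<rceil> \<le> \<epsilon> * n + 1"
    using pos of_int_ceiling_le_add_one[of "\<epsilon> * n"] by linarith
  show "1 \<le> nat \<lceil>\<epsilon> * n\<rceil>"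
    using pos by linarith
  have "\<epsilon> * n \<le> n"
    using assms by (simp add: mult_left_le_one_le)
  then show "nat \<lceil>\<epsilon> * n\<rceil> \<le> n"
    by (simp add: nat_le_iff ceiling_le_iff)
qed

lemma threshold_le_deg_bounds:
  fixes \<epsilon> deg :: real and b s n :: nat
  assumes "0 < \<epsilon>" "\<epsilon> < 1" "1 \<le> b" "real s * (real n - 1) \<le> deg" "1 \<le> n"
  defines "D \<equiv> (1 - \<epsilon>) * (s * (real n - 1)) - 3 * \<epsilon> * s * n"
  shows "D \<le> deg - (2 * real b + 1) * (\<epsilon> * s * n / b)"
    and "D \<le> (1 - \<epsilon>) * deg - 2 * real b * (\<epsilon> * s * n / b)"
proof -
  define X where "X = \<epsilon> * s * n"
  have "0 \<le> X"
    unfolding X_def using assms(1) by simp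
  have D: "D = (1 - \<epsilon>) * (s * (real n - 1)) - 3 * X"
    unfolding D_def X_def by simp
  have "0 \<le> real s * (real n - 1)"
    using assms(5) by simp
  then have shrink: "(1 - \<epsilon>) * (s * (real n - 1)) \<le> s * (real n - 1)"
    and scale: "(1 - \<epsilon>) * (s * (real n - 1)) \<le> (1 - \<epsilon>) * deg"
    using assms(1,2,4) by (auto simp: mult_left_le_one_le intro: mult_left_mono)
  have "(2 * real b + 1) / b \<le> 3"
    using assms(3) by (simp add: divide_le_eq)
  then have "(2 * real b + 1) / b * X \<le> 3 * X"
    using \<open>0 \<le> X\<close> by (rule mult_right_mono)
  then show "D \<le> deg - (2 * real b + 1) * (\<epsilon> * s * n / b)"
    unfolding D X_def[symmetric] using shrink assms(4) by simp
  have "2 * real b * (X / b) = 2 * X"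
    using assms(3) by simp
  then show "D \<le> (1 - \<epsilon>) * deg - 2 * real b * (\<epsilon> * s * n / b)"
    unfolding D X_def[symmetric] using scale \<open>0 \<le> X\<close> by simp
qed

lemma splus_winning_two_multicliques:
  fixes \<delta> \<epsilon> :: real
  assumes \<epsilon>: "0 < \<epsilon>" "\<epsilon> < \<delta> / 10" "\<epsilon> < 1"
    and large: "4 * (3 + 4 / \<epsilon>) / \<delta> \<le> ln n" "8 / \<delta> \<le> n"
    and "1 \<le> s" "1 \<le> b" and H: "two_multicliques V1 V2 E ends n s"
    and b_le: "real b \<le> (1 - \<delta>) * s * n / ln n"
  shows "splus_winning (V1 \<union> V2) E ends (\<epsilon> * s * n / b) b \<epsilon>"
proof -
  have "0 < 8 / \<delta>"
    using \<epsilon>(1,2) by simp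
  then have "0 < real n"
    using large(2) by linarith
  then have "1 \<le> n"
    by simp
  note m = nat_ceiling_mult_bounds[OF \<epsilon>(1) _ this]
  show ?thesis
  proof (rule splus_winning_if_threshold[where m = "nat \<lceil>\<epsilon> * n\<rceil>"])
    show "2 * real b + 2 * real b * card (V1 \<union> V2) / nat \<lceil>\<epsilon> * n\<rceil>
        + real b * harm (nat \<lceil>\<epsilon> * n\<rceil> - 1) + real s * nat \<lceil>\<epsilon> * n\<rceil>
        < (1 - \<epsilon>) * (s * (real n - 1)) - 3 * \<epsilon> * s * n"
      unfolding two_multicliques_card[OF H] using \<epsilon>(3) m
      by (intro potential_bound_lt_threshold[OF \<epsilon>(1,2) \<open>1 \<le> s\<close> large b_le]) auto
    show "(1 - \<epsilon>) * (s * (real n - 1)) - 3 * \<epsilon> * s * n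
        \<le> real (deg_in ends E w) - (2 * real b + 1) * (\<epsilon> * s * n / b)"
      and "(1 - \<epsilon>) * (s * (real n - 1)) - 3 * \<epsilon> * s * n
        \<le> (1 - \<epsilon>) * real (deg_in ends E w) - 2 * real b * (\<epsilon> * s * n / b)"
      if "w \<in> V1 \<union> V2" for w
      using threshold_le_deg_bounds[OF \<epsilon>(1,3) \<open>1 \<le> b\<close> two_multicliques_deg_in[OF H that]
          \<open>1 \<le> n\<close>] by auto
  qed (use two_multicliques_finite_card_ends[OF H] two_multicliques_multiplicity[OF H] m \<epsilon> in auto)
qed

theorem lemma2p6:
  fixes \<delta> :: real
  assumes "\<delta> > 0"
  shows "\<exists>\<epsilon>'>0. \<forall>\<epsilon>::real. 0 < \<epsilon> \<and> \<epsilon> < \<epsilon>' \<longrightarrow>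
           (\<exists>N::nat. \<forall>n\<ge>N. \<forall>(s'::nat) (b::nat) (V1::nat set) (V2::nat set) (E::nat set)
              (ends::nat \<Rightarrow> nat set).
              s' \<ge> 1 \<and> b \<ge> 1 \<and> two_multicliques V1 V2 E ends n s' \<and>
              real b \<le> (1 - \<delta>) * real s' * real n / ln (real n) \<longrightarrow>
              splus_winning (V1 \<union> V2) E ends (\<epsilon> * real s' * real n / real b) b \<epsilon>)"
proof (intro exI[of _ "min (\<delta> / 10) 1"] conjI allI impI)
  show "min (\<delta> / 10) 1 > 0"
    using assms by simp
  fix \<epsilon> :: real
  assume "0 < \<epsilon> \<and> \<epsilon> < min (\<delta> / 10) 1"
  then have \<epsilon>: "0 < \<epsilon>" "\<epsilon> < \<delta> / 10" "\<epsilon> < 1"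
    by auto
  have "\<forall>\<^sub>F n in sequentially. 4 * (3 + 4 / \<epsilon>) / \<delta> \<le> ln (real n) \<and> 8 / \<delta> \<le> real n"
    by (intro eventually_conj) real_asymp+
  then obtain N where "\<And>n. N \<le> n \<Longrightarrow> 4 * (3 + 4 / \<epsilon>) / \<delta> \<le> ln (real n) \<and> 8 / \<delta> \<le> real n"
    unfolding eventually_sequentially by blast
  then show "\<exists>N::nat. \<forall>n\<ge>N. \<forall>s' b V1 V2 E (ends::nat \<Rightarrow> nat set).
          s' \<ge> 1 \<and> b \<ge> 1 \<and> two_multicliques V1 V2 E ends n s' \<and>
          real b \<le> (1 - \<delta>) * real s' * real n / ln (real n) \<longrightarrow>
          splus_winning (V1 \<union> V2) E ends (\<epsilon> * real s' * real n / real b) b \<epsilon>"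
    using splus_winning_two_multicliques[OF \<epsilon>] by blast
qed

end
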